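(* Let $n\ge2$, let $\zeta_1,\dots,\zeta_M$ be distinct points of $\mathbb{D}$ and let $W_1,\dots,W_M\in\Omega_{1,n}$. Write $\pi_n=(X,Y)$. If there exists a holomorphic map $F:\mathbb{D}\to\Omega_{1,n}$ with $F(\zeta_j)=W_j$ for every $j$, then for each $z\in\overline{\mathbb{D}}$ the $M\times M$ matrix \[ M_z:=\left[\frac{1-\overline{\Psi_n(z;X(W_j),Y(W_j))}\,\Psi_n(z;X(W_k),Y(W_k))}{1-\overline{\zeta_j}\zeta_k}\right]_{j,k=1}^M \] is positive semi-definite (in particular, each $\Psi_n(\cdot;X(W_j),Y(W_j))$ has no poles in $\overline{\mathbb{D}}$).
   Context: $\mathbb{D}$ is the open unit disc. For $A\in\mathbb{C}^{n\times n}$, $A_I$ ($I$ an increasing $j$-tuple in $\{1,\dots,n\}$) is the principal submatrix with rows and columns indexed by $I$; $\mathscr{I}^j$ is the set of such $j$-tuples. $\mu_E(A):=\big(\inf\{\|X\|: X\in E,\ \mathbb{I}-AX \text{ singular}\}\big)^{-1}$ (operator norm), $E^{1,n}:=\{[w]\oplus(z\mathbb{I}_{n-1}): z,w\in\mathbb{C}\}$, $\Omega_{1,n}:=\{A:\mu_{E^{1,n}}(A)<1\}$. The map $\pi_n=(X,Y):\mathbb{C}^{n\times n}\to\mathbb{C}^n\times\mathbb{C}^{n-1}$: $X_1(A)=a_{1,1}$, $X_j(A)=\sum_{I\in\mathscr{I}^j: i_1=1}\det(A_I)$ ($2\le j\le n$), $Y_j(A)=\sum_{I\in\mathscr{I}^j: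 i_1\ge2}\det(A_I)$ ($1\le j\le n-1$). For $(x,y)\in\mathbb{C}^n\times\mathbb{C}^{n-1}$: $P_n(z;x):=\sum_{j=0}^{n-1}(-1)^jx_{j+1}z^j$, $Q_n(z;y):=1+\sum_{j=1}^{n-1}(-1)^jy_jz^j$, and $\Psi_n(\cdot;x,y)$ is the rational function $P_n(\cdot;x)/Q_n(\cdot;y)$ after cancelling all common linear factors of numerator and denominator. *)

theory Defs
  imports "HOL-Analysis.Analysis" "HOL-Combinatorics.Permutations"
    "HOL-Computational_Algebra.Polynomial_Factorial" "HOL-Computational_Algebra.Field_as_Ring"
begin

text \<open>n x n complex matrices are represented as functions nat => nat => complex,
  only entries with indices < n being relevant; paper index i corresponds to i-1 here.\<close>

type_synonym cmat = "nat \<Rightarrow> nat \<Rightarrow> complex"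

definition vnorm :: "nat \<Rightarrow> (nat \<Rightarrow> complex) \<Rightarrow> real" where
  "vnorm n v = sqrt (\<Sum>i<n. (cmod (v i))^2)"

definition mvec :: "nat \<Rightarrow> cmat \<Rightarrow> (nat \<Rightarrow> complex) \<Rightarrow> (nat \<Rightarrow> complex)" where
  "mvec n A v = (\<lambda>i. \<Sum>k<n. A i k * v k)"

definition mmul :: "nat \<Rightarrow> cmat \<Rightarrow> cmat \<Rightarrow> cmat" where
  "mmul n A B = (\<lambda>i j. \<Sum>k<n. A i k * B k j)"

definition opnorm :: "nat \<Rightarrow> cmat \<Rightarrow> real" where
  "opnorm n A = Sup {vnorm n (mvec n A v) | v. vnorm n v \<le> 1}"

definition idm :: cmat where
  "idm = (\<lambda>i j. if i = j then 1 else 0)"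

definition pdet :: "cmat \<Rightarrow> nat set \<Rightarrow> complex" where
  "pdet A I = (\<Sum>p | p permutes I. of_int (sign p) * (\<Prod>i\<in>I. A i (p i)))"

definition cdet :: "nat \<Rightarrow> cmat \<Rightarrow> complex" where
  "cdet n A = pdet A {..<n}"

definition singular :: "nat \<Rightarrow> cmat \<Rightarrow> bool" where
  "singular n A \<longleftrightarrow> cdet n A = 0"

text \<open>structured singular value; inf of the empty set is +infinity, so mu = 0 then\<close>
definition mu :: "nat \<Rightarrow> cmat set \<Rightarrow> cmat \<Rightarrow> real" where
  "mu n E A = (let S = {opnorm n X | X. X \<in> E \<and> singular n (\<lambda>i j. idm i j - mmul n A X i j)}
               in if S = {} then 0 else inverse (Inf S))"

definition E1n :: "cmat set" where
  "E1n = {X. \<exists>z w. X = (\<lambda>i j. if i = j then (if i = 0 then w else z) else 0)}"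

definition Omega1n :: "nat \<Rightarrow> cmat set" where
  "Omega1n n = {A. mu n E1n A < 1}"

text \<open>pi_n = (X, Y): Xc n A j for 1 <= j <= n, Yc n A j for 1 <= j <= n-1
  (paper index 1 is index 0 here)\<close>
definition Xc :: "nat \<Rightarrow> cmat \<Rightarrow> nat \<Rightarrow> complex" where
  "Xc n A j = (if j = 1 then A 0 0
     else (\<Sum>I\<in>{I. I \<subseteq> {..<n} \<and> card I = j \<and> 0 \<in> I}. pdet A I))"

definition Yc :: "nat \<Rightarrow> cmat \<Rightarrow> nat \<Rightarrow> complex" where
  "Yc n A j = (\<Sum>I\<in>{I. I \<subseteq> {..<n} \<and> card I = j \<and> 0 \<notin> I}. pdet A I)"

definition Pn :: "nat \<Rightarrow> (nat \<Rightarrow> complex) \<Rightarrow> complex poly" where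
  "Pn n x = (\<Sum>j<n. monom ((-1)^j * x (Suc j)) j)"

definition Qn :: "nat \<Rightarrow> (nat \<Rightarrow> complex) \<Rightarrow> complex poly" where
  "Qn n y = 1 + (\<Sum>j\<in>{1..<n}. monom ((-1)^j * y j) j)"

text \<open>reduced numerator / denominator: cancel all common (linear) factors, i.e. the gcd\<close>
definition Psi_num :: "nat \<Rightarrow> (nat \<Rightarrow> complex) \<Rightarrow> (nat \<Rightarrow> complex) \<Rightarrow> complex poly" where
  "Psi_num n x y = Pn n x div gcd (Pn n x) (Qn n y)"

definition Psi_den :: "nat \<Rightarrow> (nat \<Rightarrow> complex) \<Rightarrow> (nat \<Rightarrow> complex) \<Rightarrow> complex poly" where
  "Psi_den n x y = Qn n y div gcd (Pn n x) (Qn n y)"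

definition Psi :: "nat \<Rightarrow> complex \<Rightarrow> (nat \<Rightarrow> complex) \<Rightarrow> (nat \<Rightarrow> complex) \<Rightarrow> complex" where
  "Psi n z x y = poly (Psi_num n x y) z / poly (Psi_den n x y) z"

definition psd :: "nat \<Rightarrow> cmat \<Rightarrow> bool" where
  "psd m A \<longleftrightarrow> (\<forall>c :: nat \<Rightarrow> complex.
     let q = (\<Sum>j<m. \<Sum>k<m. cnj (c j) * A j k * c k) in Im q = 0 \<and> Re q \<ge> 0)"

end

theory Submission
  imports Defs "HOL-Complex_Analysis.Complex_Analysis"
begin

text \<open>
  Fix \<open>z\<close> in the closed unit disc.  For \<open>A \<in> \<Omega>_{1,n}\<close> and \<open>|w|, |z| \<le> 1\<close> the matrix
  \<open>I - A ([w] \<oplus> z I)\<close> is nonsingular, since \<open>[w] \<oplus> z I \<in> E^{1,n}\<close> has operator norm at most 1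
  and \<open>\<mu>_{E^{1,n}}(A) < 1\<close>.  Expanding its determinant into principal minors gives
  \<open>Q(z) - w P(z)\<close>, where \<open>P = P_n(\<cdot>; X(A))\<close> and \<open>Q = Q_n(\<cdot>; Y(A))\<close>.  Hence \<open>Q(z) \<noteq> 0\<close> and
  \<open>|P(z)| < |Q(z)|\<close>: the function \<open>\<Psi>_n(\<cdot>; \<pi>_n(A))\<close> has no pole at \<open>z\<close> and takes a value in
  the open disc there.  Composing with a holomorphic interpolant \<open>F\<close> into \<open>\<Omega>_{1,n}\<close> yields the
  holomorphic self-map \<open>\<xi> \<mapsto> \<Psi>_n(z; \<pi>_n(F \<xi>))\<close> of the disc, which sends \<open>\<zeta>\<^sub>j\<close> to
  \<open>\<Psi>_n(z; \<pi>_n(W\<^sub>j))\<close>; by the classical Pick theorem its Pick matrix at the nodes \<open>\<zeta>\<^sub>j\<close> is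
  positive semidefinite.
\<close>

definition quad_form :: "nat \<Rightarrow> cmat \<Rightarrow> (nat \<Rightarrow> complex) \<Rightarrow> complex" where
  "quad_form m A c = (\<Sum>j<m. \<Sum>k<m. cnj (c j) * A j k * c k)"

lemma psd_iff_quad_form:
  "psd m A \<longleftrightarrow> (\<forall>c. Im (quad_form m A c) = 0 \<and> 0 \<le> Re (quad_form m A c))"
  by (simp add: psd_def quad_form_def Let_def)

lemma quad_form_cong:
  assumes "\<And>j. j < m \<Longrightarrow> c j = d j" "\<And>j k. j < m \<Longrightarrow> k < m \<Longrightarrow> A j k = B j k"
  shows "quad_form m A c = quad_form m B d"
  unfolding quad_form_def using assms by (intro sum.cong) auto

lemma psd_cong:
  assumes "\<And>j k. j < m \<Longrightarrow> k < m \<Longrightarrow> A j k = B j k"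
  shows "psd m A \<longleftrightarrow> psd m B"
proof -
  have "quad_form m A c = quad_form m B c" for c by (rule quad_form_cong) (use assms in auto)
  then show ?thesis unfolding psd_iff_quad_form by simp
qed

lemma quad_form_congruence:
  "quad_form m (\<lambda>j k. cnj (e j) * A j k * e k) c = quad_form m A (\<lambda>k. e k * c k)"
  unfolding quad_form_def by (intro sum.cong refl) (simp add: algebra_simps)

lemma psd_zero: "psd m (\<lambda>j k. 0)"
  by (simp add: psd_def)

lemma psd_add:
  assumes "psd m A" "psd m B"
  shows "psd m (\<lambda>j k. A j k + B j k)"
proof -
  have "quad_form m (\<lambda>j k. A j k + B j k) c = quad_form m A c + quad_form m B c" for c
    unfolding quad_form_def by (simp add: algebra_simps sum.distrib)
  then show ?thesis using assms unfolding psd_iff_quad_form by simp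
qed

text \<open>\<open>v* v\<close> is positive semidefinite: its form is \<open>|\<Sum>\<^sub>k v\<^sub>k c\<^sub>k|\<^sup>2\<close>.\<close>
lemma psd_rank_one: "psd m (\<lambda>j k. cnj (v j) * v k)"
proof -
  have "quad_form m (\<lambda>j k. cnj (v j) * v k) c = of_real ((cmod (\<Sum>k<m. v k * c k))\<^sup>2)" for c
  proof -
    have "quad_form m (\<lambda>j k. cnj (v j) * v k) c = cnj (\<Sum>k<m. v k * c k) * (\<Sum>k<m. v k * c k)"
      unfolding quad_form_def cnj_sum sum_product by (intro sum.cong refl) (simp add: algebra_simps)
    then show ?thesis using complex_norm_square[of "\<Sum>k<m. v k * c k"] by (simp add: mult.commute)
  qed
  then show ?thesis unfolding psd_iff_quad_form by simp
qed

lemma psd_congruence_extend: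
  assumes "psd m A" "e m = 0"
  shows "psd (Suc m) (\<lambda>j k. cnj (e j) * A j k * e k)"
proof -
  have "quad_form (Suc m) (\<lambda>j k. cnj (e j) * A j k * e k) c = quad_form m A (\<lambda>k. e k * c k)" for c
    unfolding quad_form_congruence by (simp add: quad_form_def assms(2))
  then show ?thesis using assms(1) unfolding psd_iff_quad_form by simp
qed

lemma psd_congruence_cancel:
  assumes "psd m (\<lambda>j k. cnj (e j) * A j k * e k)" "\<And>k. k < m \<Longrightarrow> e k \<noteq> 0"
  shows "psd m A"
proof -
  have "quad_form m A c = quad_form m (\<lambda>j k. cnj (e j) * A j k * e k) (\<lambda>k. c k / e k)" for c
    unfolding quad_form_congruence by (rule quad_form_cong) (simp_all add: assms(2))
  then show ?thesis using assms(1) unfolding psd_iff_quad_form by simp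
qed

lemma disc_denom_nonzero:
  assumes "cmod x < 1" "cmod y < 1"
  shows "1 - cnj x * y \<noteq> 0"
proof -
  have "cmod (cnj x * y) < 1 * 1" by (rule norm_mult_less) (use assms in simp_all)
  then show ?thesis by auto
qed

text \<open>\<open>moebius_factor a u\<close> is a square root of the derivative of the disc automorphism
  \<open>\<phi>\<^sub>a(u) = (u - a) / (1 - cnj a * u)\<close> (\<open>Moebius_function 0 a\<close>), normalised so that the next identity holds.\<close>
definition moebius_factor :: "complex \<Rightarrow> complex \<Rightarrow> complex" where
  "moebius_factor a u = of_real (sqrt (1 - (cmod a)\<^sup>2)) / (1 - cnj a * u)"

lemma moebius_kernel:
  assumes a: "cmod a < 1" and "cmod u < 1" "cmod v < 1"
  shows "1 - cnj (Moebius_function 0 a u) * Moebius_function 0 a v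
       = cnj (moebius_factor a u) * (1 - cnj u * v) * moebius_factor a v"
proof -
  define D where "D = cnj (1 - cnj a * u) * (1 - cnj a * v)"
  have "1 - cnj a * u \<noteq> 0" "1 - cnj a * v \<noteq> 0"
    using disc_denom_nonzero assms by auto
  then have D: "D \<noteq> 0" unfolding D_def by (metis complex_cnj_zero_iff mult_eq_0_iff)
  have r: "cnj (of_real (sqrt (1 - (cmod a)\<^sup>2))) * of_real (sqrt (1 - (cmod a)\<^sup>2)) = 1 - cnj a * a"
    using a complex_norm_square[of a]
    by (simp add: mult.commute abs_square_less_1 less_imp_le flip: of_real_mult)
  have "1 - cnj (Moebius_function 0 a u) * Moebius_function 0 a v = (D - (cnj u - cnj a) * (v - a)) / D"
    using D by (simp add: Moebius_function_simple D_def field_simps)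
  also have "D - (cnj u - cnj a) * (v - a) = (1 - cnj a * a) * (1 - cnj u * v)"
    by (simp add: D_def algebra_simps)
  also have "(1 - cnj a * a) * (1 - cnj u * v) / D
      = cnj (moebius_factor a u) * (1 - cnj u * v) * moebius_factor a v"
    unfolding moebius_factor_def D_def r[symmetric] by simp
  finally show ?thesis .
qed

definition pick_matrix :: "(complex \<Rightarrow> complex) \<Rightarrow> (nat \<Rightarrow> complex) \<Rightarrow> cmat" where
  "pick_matrix f \<zeta> = (\<lambda>j k. (1 - cnj (f (\<zeta> j)) * f (\<zeta> k)) / (1 - cnj (\<zeta> j) * \<zeta> k))"

lemma pick_matrix_mult:
  "pick_matrix (\<lambda>z. b z * g z) \<zeta> j k
     = pick_matrix b \<zeta> j k + cnj (b (\<zeta> j)) * pick_matrix g \<zeta> j k * b (\<zeta> k)"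
proof -
  have "1 - cnj (b (\<zeta> j) * g (\<zeta> j)) * (b (\<zeta> k) * g (\<zeta> k))
      = (1 - cnj (b (\<zeta> j)) * b (\<zeta> k)) + cnj (b (\<zeta> j)) * (1 - cnj (g (\<zeta> j)) * g (\<zeta> k)) * b (\<zeta> k)"
    by (simp add: algebra_simps)
  then show ?thesis unfolding pick_matrix_def by (simp only: add_divide_distrib times_divide_eq_left times_divide_eq_right)
qed

lemma pick_matrix_moebius_comp:
  assumes "cmod a < 1" "cmod (f (\<zeta> j)) < 1" "cmod (f (\<zeta> k)) < 1"
  shows "pick_matrix (Moebius_function 0 a \<circ> f) \<zeta> j k
       = cnj (moebius_factor a (f (\<zeta> j))) * pick_matrix f \<zeta> j k * moebius_factor a (f (\<zeta> k))"
  unfolding pick_matrix_def by (simp add: moebius_kernel[OF assms])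

lemma pick_matrix_moebius:
  assumes "cmod p < 1" "cmod (\<zeta> j) < 1" "cmod (\<zeta> k) < 1"
  shows "pick_matrix (Moebius_function 0 p) \<zeta> j k
       = cnj (moebius_factor p (\<zeta> j)) * moebius_factor p (\<zeta> k)"
proof -
  have "1 - cnj (\<zeta> j) * \<zeta> k \<noteq> 0" using disc_denom_nonzero assms(2,3) .
  then show ?thesis
    using pick_matrix_moebius_comp[of p id \<zeta> j k] assms by (simp add: pick_matrix_def)
qed

lemma schwarz_quotient:
  assumes holk: "k holomorphic_on ball 0 1" and k0: "k 0 = 0"
    and kball: "\<And>z. cmod z < 1 \<Longrightarrow> cmod (k z) < 1"
  obtains g where "g holomorphic_on ball 0 1" "\<And>z. cmod z < 1 \<Longrightarrow> k z = z * g z"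
    "\<And>z. cmod z < 1 \<Longrightarrow> cmod (g z) \<le> 1"
proof -
  obtain g where holg: "g holomorphic_on ball 0 1"
    and kfac: "\<And>z. cmod z < 1 \<Longrightarrow> k z = z * g z" and dk0: "deriv k 0 = g 0"
    using Schwarz3[OF holk k0] by blast
  have "cmod (g w) \<le> 1" if w: "cmod w < 1" for w
  proof (cases "w = 0")
    case True
    then show ?thesis using Schwarz_Lemma(2)[OF holk k0 kball w] dk0 by simp
  next
    case False
    have "cmod w * cmod (g w) \<le> cmod w * 1"
      using Schwarz_Lemma(1)[OF holk k0 kball w] kfac[OF w] by (simp add: norm_mult)
    then show ?thesis using False by simp
  qed
  with holg kfac show thesis using that by blast
qed

text \<open>A self-map of the disc vanishing at \<open>p\<close> factors as \<open>\<phi>\<^sub>p \<cdot> g\<close> with \<open>|g| \<le> 1\<close>: apply the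
  previous lemma to \<open>h \<circ> \<phi>\<^sub>-\<^sub>p\<close>, which vanishes at 0.\<close>
lemma disc_self_map_factor:
  assumes holh: "h holomorphic_on ball 0 1" and hball: "\<forall>z\<in>ball 0 1. h z \<in> ball 0 1"
    and p: "p \<in> ball 0 1" and hp: "h p = 0"
  obtains g where "g holomorphic_on ball 0 1" "\<forall>z\<in>ball 0 1. cmod (g z) \<le> 1"
    "\<forall>z\<in>ball 0 1. h z = Moebius_function 0 p z * g z"
proof -
  have p': "cmod p < 1" "cmod (-p) < 1" using p by auto
  define k where "k = h \<circ> Moebius_function 0 (-p)"
  have holk: "k holomorphic_on ball 0 1"
    unfolding k_def
    by (rule holomorphic_on_compose[OF Moebius_function_holomorphic[OF p'(2)] holomorphic_on_subset[OF holh]])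
      (use Moebius_function_norm_lt_1[OF p'(2)] in auto)
  have k0: "k 0 = 0" by (simp add: k_def Moebius_function_of_zero hp)
  have kball: "cmod (k z) < 1" if "cmod z < 1" for z
    using hball Moebius_function_norm_lt_1[OF p'(2) that] by (simp add: k_def)
  obtain g0 where holg0: "g0 holomorphic_on ball 0 1"
    and kfac: "\<And>z. cmod z < 1 \<Longrightarrow> k z = z * g0 z" and g0le: "\<And>z. cmod z < 1 \<Longrightarrow> cmod (g0 z) \<le> 1"
    using schwarz_quotient[OF holk k0 kball] by blast
  define g where "g = g0 \<circ> Moebius_function 0 p"
  show thesis
  proof
    show "g holomorphic_on ball 0 1"
      unfolding g_def
      by (rule holomorphic_on_compose[OF Moebius_function_holomorphic[OF p'(1)] holomorphic_on_subset[OF holg0]])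
        (use Moebius_function_norm_lt_1[OF p'(1)] in auto)
    show "\<forall>z\<in>ball 0 1. cmod (g z) \<le> 1"
      using g0le Moebius_function_norm_lt_1[OF p'(1)] by (simp add: g_def)
    show "\<forall>z\<in>ball 0 1. h z = Moebius_function 0 p z * g z"
    proof
      fix z :: complex assume "z \<in> ball 0 1"
      then have z: "cmod z < 1" by simp
      have "Moebius_function 0 (-p) (Moebius_function 0 p z) = z"
        by (rule Moebius_function_compose) (use p' z in auto)
      then have "h z = k (Moebius_function 0 p z)" by (simp add: k_def)
      then show "h z = Moebius_function 0 p z * g z"
        using kfac[OF Moebius_function_norm_lt_1[OF p'(1) z]] by (simp add: g_def)
    qed
  qed
qed

text \<open>Maximum modulus: a holomorphic map into the closed disc maps into the open disc
  unless it is a unimodular constant.\<close>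
lemma bounded_disc_map_cases:
  assumes holg: "g holomorphic_on ball 0 1" and gle: "\<forall>z\<in>ball 0 1. cmod (g z) \<le> 1"
  obtains "\<forall>z\<in>ball 0 1. g z \<in> ball 0 1"
    | c where "cmod c = 1" "\<forall>z\<in>ball 0 1. g z = c"
proof (cases "\<exists>x\<in>ball 0 1. cmod (g x) = 1")
  case True
  then obtain x where x: "x \<in> ball 0 1" "cmod (g x) = 1" by blast
  have "g constant_on ball 0 1"
  proof (rule Schwarz2[OF holg])
    show "0 < 1 - cmod x" "ball x (1 - cmod x) \<subseteq> ball 0 1"
      using x by (simp_all add: ball_subset_ball_iff)
    show "cmod (g z) \<le> cmod (g x)" if "cmod (x - z) < 1 - cmod x" for z
    proof -
      have "cmod z \<le> cmod x + cmod (x - z)" by (metis norm_triangle_sub norm_minus_commute)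
      then show ?thesis using that gle x by auto
    qed
  qed
  then obtain c where "\<forall>z\<in>ball 0 1. g z = c" by (auto simp: constant_on_def)
  with x that(2)[of c] show thesis by auto
next
  case False
  then show thesis using that(1) gle by (auto simp: less_le)
qed

lemma psd_pick_matrix_moebius_comp:
  assumes a: "cmod a < 1" and f: "\<forall>j<m. cmod (f (\<zeta> j)) < 1"
    and psd: "psd m (pick_matrix (Moebius_function 0 a \<circ> f) \<zeta>)"
  shows "psd m (pick_matrix f \<zeta>)"
proof (rule psd_congruence_cancel)
  have "pick_matrix (Moebius_function 0 a \<circ> f) \<zeta> j k
      = cnj (moebius_factor a (f (\<zeta> j))) * pick_matrix f \<zeta> j k * moebius_factor a (f (\<zeta> k))"
    if "j < m" "k < m" for j k
    by (rule pick_matrix_moebius_comp) (use a f that in auto)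
  then show "psd m (\<lambda>j k. cnj (moebius_factor a (f (\<zeta> j))) * pick_matrix f \<zeta> j k
                            * moebius_factor a (f (\<zeta> k)))"
    using psd psd_cong[of m "pick_matrix (Moebius_function 0 a \<circ> f) \<zeta>"] by simp
  fix k assume "k < m"
  then have "1 - cnj a * f (\<zeta> k) \<noteq> 0" using disc_denom_nonzero a f by simp
  then show "moebius_factor a (f (\<zeta> k)) \<noteq> 0"
    using a abs_square_less_1[of "cmod a"] by (simp add: moebius_factor_def)
qed

text \<open>Dividing out the Blaschke factor at the last node: if \<open>h = \<phi>\<^sub>p \<cdot> g\<close> with \<open>p = \<zeta>\<^sub>m\<close>, the Pick
  matrix of \<open>h\<close> is the rank-one Pick matrix of \<open>\<phi>\<^sub>p\<close> plus a congruent copy of the Pick matrix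
  of \<open>g\<close> at the first \<open>m\<close> nodes (the congruence factor vanishes at \<open>\<zeta>\<^sub>m\<close>).\<close>
lemma psd_pick_matrix_blaschke_factor:
  assumes nodes: "\<forall>j<Suc m. \<zeta> j \<in> ball 0 1"
    and hfac: "\<forall>z\<in>ball 0 1. h z = Moebius_function 0 (\<zeta> m) z * g z"
    and psd_g: "psd m (pick_matrix g \<zeta>)"
  shows "psd (Suc m) (pick_matrix h \<zeta>)"
proof -
  define b where "b = Moebius_function 0 (\<zeta> m)"
  have \<zeta>: "cmod (\<zeta> j) < 1" if "j < Suc m" for j using nodes that by simp
  have split: "pick_matrix h \<zeta> j k = cnj (moebius_factor (\<zeta> m) (\<zeta> j)) * moebius_factor (\<zeta> m) (\<zeta> k)
                                   + cnj (b (\<zeta> j)) * pick_matrix g \<zeta> j k * b (\<zeta> k)"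
    if "j < Suc m" "k < Suc m" for j k
  proof -
    have "pick_matrix h \<zeta> j k = pick_matrix (\<lambda>z. b z * g z) \<zeta> j k"
      using hfac \<zeta> that by (simp add: pick_matrix_def b_def)
    then show ?thesis
      unfolding pick_matrix_mult b_def using pick_matrix_moebius \<zeta> that by simp
  qed
  have "psd (Suc m) (\<lambda>j k. cnj (moebius_factor (\<zeta> m) (\<zeta> j)) * moebius_factor (\<zeta> m) (\<zeta> k)
                          + cnj (b (\<zeta> j)) * pick_matrix g \<zeta> j k * b (\<zeta> k))"
    by (intro psd_add psd_rank_one psd_congruence_extend psd_g) (simp add: b_def Moebius_function_eq_zero)
  then show ?thesis using psd_cong[of "Suc m", OF split] by simp
qed

text \<open>Induction on the number of nodes: move
  \<open>f(\<zeta>\<^sub>m)\<close> to 0 by a disc automorphism, divide out the Blaschke factor at \<open>\<zeta>\<^sub>m\<close>, and apply the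
  induction hypothesis to the quotient unless it is a unimodular constant.\<close>
theorem pick_matrix_psd:
  assumes "f holomorphic_on ball 0 1" "\<forall>z\<in>ball 0 1. f z \<in> ball 0 1" "\<forall>j<m. \<zeta> j \<in> ball 0 1"
  shows "psd m (pick_matrix f \<zeta>)"
  using assms
proof (induction m arbitrary: f)
  case 0
  show ?case by (simp add: psd_def)
next
  case (Suc m)
  note holf = Suc.prems(1) and fball = Suc.prems(2) and nodes = Suc.prems(3)
  have p: "\<zeta> m \<in> ball 0 1" using nodes by simp
  define a where "a = f (\<zeta> m)"
  have a: "cmod a < 1" using fball p by (simp add: a_def)
  define h where "h = Moebius_function 0 a \<circ> f"
  have holh: "h holomorphic_on ball 0 1"
    unfolding h_def
    by (rule holomorphic_on_compose[OF holf holomorphic_on_subset[OF Moebius_function_holomorphic[OF a]]])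
      (use fball in auto)
  have hball: "\<forall>z\<in>ball 0 1. h z \<in> ball 0 1"
    using Moebius_function_norm_lt_1[OF a] fball by (simp add: h_def)
  have hp: "h (\<zeta> m) = 0" by (simp add: h_def a_def Moebius_function_eq_zero)
  obtain g where holg: "g holomorphic_on ball 0 1" and gle: "\<forall>z\<in>ball 0 1. cmod (g z) \<le> 1"
    and hfac: "\<forall>z\<in>ball 0 1. h z = Moebius_function 0 (\<zeta> m) z * g z"
    by (rule disc_self_map_factor[OF holh hball p hp])
  have "psd m (pick_matrix g \<zeta>)"
    using holg gle
  proof (cases rule: bounded_disc_map_cases)
    case 1
    then show ?thesis using Suc.IH holg nodes by simp
  next
    case (2 c)
    have "1 - cnj c * c = 0" using \<open>cmod c = 1\<close> complex_norm_square[of c] by (simp add: mult.commute)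
    then have "psd m (pick_matrix g \<zeta>) \<longleftrightarrow> psd m (\<lambda>j k. 0)"
      using 2 nodes by (intro psd_cong) (simp add: pick_matrix_def)
    then show ?thesis using psd_zero by simp
  qed
  then have "psd (Suc m) (pick_matrix h \<zeta>)"
    using psd_pick_matrix_blaschke_factor nodes hfac by blast
  then show ?case unfolding h_def
    by (rule psd_pick_matrix_moebius_comp[OF a, rotated]) (use fball nodes in auto)
qed

lemma pdet_cong:
  assumes "\<And>i j. i \<in> I \<Longrightarrow> j \<in> I \<Longrightarrow> A i j = B i j"
  shows "pdet A I = pdet B I"
  unfolding pdet_def
proof (rule sum.cong[OF refl])
  fix p assume "p \<in> {p. p permutes I}"
  then have "p i \<in> I" if "i \<in> I" for i using permutes_in_image that by fastforce
  then show "of_int (sign p) * (\<Prod>i\<in>I. A i (p i)) = of_int (sign p) * (\<Prod>i\<in>I. B i (p i))"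
    using assms by (metis (no_types, lifting) prod.cong)
qed

lemma permutes_fixing_complement:
  assumes "S \<subseteq> N"
  shows "{p. p permutes N \<and> (\<forall>i\<in>N - S. p i = i)} = {p. p permutes S}"
proof (intro set_eqI iffI)
  fix p assume "p \<in> {p. p permutes N \<and> (\<forall>i\<in>N - S. p i = i)}"
  then have p: "p permutes N" "\<forall>i\<in>N - S. p i = i" by auto
  have "\<forall>x. x \<notin> S \<longrightarrow> p x = x" using p permutes_not_in by fastforce
  moreover have "\<forall>y. \<exists>!x. p x = y" using p(1) unfolding permutes_def by blast
  ultimately show "p \<in> {p. p permutes S}" unfolding permutes_def by blast
next
  fix p assume "p \<in> {p. p permutes S}"
  then show "p \<in> {p. p permutes N \<and> (\<forall>i\<in>N - S. p i = i)}"
    using permutes_subset[OF _ assms] permutes_not_in by fastforce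
qed

lemma prod_idm:
  assumes "finite N"
  shows "(\<Prod>i\<in>N. idm i (p i)) = (if \<forall>i\<in>N. p i = i then 1 else 0)"
proof (cases "\<forall>i\<in>N. p i = i")
  case True
  then show ?thesis by (auto simp: idm_def intro!: prod.neutral)
next
  case False
  then obtain i where "i \<in> N" "p i \<noteq> i" by blast
  then show ?thesis using assms by (auto simp: idm_def intro!: prod_zero bexI[of _ i])
qed

lemma prod_permuted_scaling:
  fixes A :: "'a \<Rightarrow> 'a \<Rightarrow> 'b::comm_ring_1"
  assumes "p permutes S" "finite S"
  shows "(\<Prod>i\<in>S. - (A i (p i) * d (p i))) = (-1)^card S * (\<Prod>i\<in>S. d i) * (\<Prod>i\<in>S. A i (p i))"
proof -
  have "(\<Prod>i\<in>S. d (p i)) = (\<Prod>i\<in>S. d i)"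
    using prod.reindex_bij_betw[OF permutes_imp_bij[OF assms(1)], of d] .
  moreover have "(\<Prod>i\<in>S. - (A i (p i) * d (p i)))
      = (-1)^card S * ((\<Prod>i\<in>S. A i (p i)) * (\<Prod>i\<in>S. d (p i)))"
    using prod_uminus[of "\<lambda>i. A i (p i) * d (p i)" S] by (simp add: prod.distrib)
  ultimately show ?thesis by (simp add: mult_ac)
qed

lemma sum_permutes_split_term:
  assumes fin: "finite N" and SN: "S \<subseteq> N"
  shows "(\<Sum>p | p permutes N. of_int (sign p)
            * ((\<Prod>i\<in>S. - (A i (p i) * d (p i))) * (\<Prod>i\<in>N - S. idm i (p i))))
       = (-1)^card S * (\<Prod>i\<in>S. d i) * pdet A S"
proof -
  have finS: "finite S" using finite_subset[OF SN fin] .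
  let ?u = "\<lambda>p. of_int (sign p) * (\<Prod>i\<in>S. - (A i (p i) * d (p i))) :: complex"
  have "(\<Sum>p | p permutes N. of_int (sign p)
            * ((\<Prod>i\<in>S. - (A i (p i) * d (p i))) * (\<Prod>i\<in>N - S. idm i (p i))))
      = (\<Sum>p | p permutes N. if \<forall>i\<in>N - S. p i = i then ?u p else 0)"
    using fin by (intro sum.cong refl) (simp add: prod_idm)
  also have "\<dots> = (\<Sum>p\<in>{p \<in> {p. p permutes N}. \<forall>i\<in>N - S. p i = i}. ?u p)"
    by (rule sum.inter_filter[symmetric]) (simp add: finite_permutations fin)
  also have "\<dots> = (\<Sum>p | p permutes S. ?u p)"
    using permutes_fixing_complement[OF SN] by simp
  also have "\<dots> = (-1)^card S * (\<Prod>i\<in>S. d i) * pdet A S"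
    unfolding pdet_def sum_distrib_left
  proof (rule sum.cong[OF refl])
    fix p assume "p \<in> {p. p permutes S}"
    then show "?u p = (-1)^card S * (\<Prod>i\<in>S. d i) * (of_int (sign p) * (\<Prod>i\<in>S. A i (p i)))"
      using prod_permuted_scaling[of p S A d] finS by (simp add: mult_ac)
  qed
  finally show ?thesis .
qed

text \<open>Expand each product over \<open>N\<close> as a sum
  over subsets \<open>S\<close> and exchange the two summations.\<close>
lemma pdet_identity_minus:
  assumes fin: "finite N"
  shows "pdet (\<lambda>i j. idm i j - A i j * d j) N = (\<Sum>S\<in>Pow N. (-1)^card S * (\<Prod>i\<in>S. d i) * pdet A S)"
proof -
  let ?t = "\<lambda>p S. of_int (sign p) * ((\<Prod>i\<in>S. - (A i (p i) * d (p i))) * (\<Prod>i\<in>N - S. idm i (p i)))"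
  have "pdet (\<lambda>i j. idm i j - A i j * d j) N = (\<Sum>p | p permutes N. \<Sum>S\<in>Pow N. ?t p S)"
    unfolding pdet_def
  proof (rule sum.cong[OF refl])
    fix p
    have "(\<Prod>i\<in>N. idm i (p i) - A i (p i) * d (p i)) = (\<Prod>i\<in>N. - (A i (p i) * d (p i)) + idm i (p i))"
      by simp
    also have "\<dots> = (\<Sum>S\<in>Pow N. (\<Prod>i\<in>S. - (A i (p i) * d (p i))) * (\<Prod>i\<in>N - S. idm i (p i)))"
      by (rule prod_add[OF fin])
    finally show "of_int (sign p) * (\<Prod>i\<in>N. idm i (p i) - A i (p i) * d (p i)) = (\<Sum>S\<in>Pow N. ?t p S)"
      by (simp add: sum_distrib_left)
  qed
  also have "\<dots> = (\<Sum>S\<in>Pow N. \<Sum>p | p permutes N. ?t p S)"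
    by (rule sum.swap)
  also have "\<dots> = (\<Sum>S\<in>Pow N. (-1)^card S * (\<Prod>i\<in>S. d i) * pdet A S)"
    using sum_permutes_split_term[OF fin] by (intro sum.cong refl) simp
  finally show ?thesis .
qed

lemma sum_subsets_by_card:
  fixes f :: "nat \<Rightarrow> 'a::semiring_0"
  assumes "finite N"
  shows "(\<Sum>S | S \<subseteq> N \<and> P S. f (card S) * g S)
       = (\<Sum>j\<le>card N. f j * (\<Sum>S | S \<subseteq> N \<and> card S = j \<and> P S. g S))"
proof -
  have fin: "finite {S. S \<subseteq> N \<and> P S}" by (rule finite_subset[of _ "Pow N"]) (use assms in auto)
  have img: "card ` {S. S \<subseteq> N \<and> P S} \<subseteq> {..card N}" using assms by (auto intro: card_mono)
  have layer: "{S \<in> {S. S \<subseteq> N \<and> P S}. card S = j} = {S. S \<subseteq> N \<and> card S = j \<and> P S}" for j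
    by auto
  have "(\<Sum>S | S \<subseteq> N \<and> P S. f (card S) * g S)
      = (\<Sum>j\<le>card N. \<Sum>S\<in>{S \<in> {S. S \<subseteq> N \<and> P S}. card S = j}. f (card S) * g S)"
    by (rule sum.group[OF fin _ img, symmetric]) simp
  also have "\<dots> = (\<Sum>j\<le>card N. f j * (\<Sum>S | S \<subseteq> N \<and> card S = j \<and> P S. g S))"
    unfolding layer by (auto simp: sum_distrib_left[symmetric] intro!: sum.cong)
  finally show ?thesis .
qed

lemma poly_Pn: "poly (Pn n x) z = (\<Sum>j<n. (-1)^j * x (Suc j) * z^j)"
  unfolding Pn_def by (simp add: poly_sum poly_monom)

lemma poly_Qn: "poly (Qn n y) z = 1 + (\<Sum>j\<in>{1..<n}. (-1)^j * y j * z^j)"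
  unfolding Qn_def by (simp add: poly_sum poly_monom)

text \<open>The extreme coefficients of \<open>Q\<close>: the empty minor is 1, and no \<open>n\<close>-subset avoids index 0.\<close>
lemma Yc_0: "Yc n A 0 = 1"
proof -
  have "{I. I \<subseteq> {..<n} \<and> card I = 0 \<and> 0 \<notin> I} = {{}}"
  proof (intro set_eqI iffI)
    fix I assume "I \<in> {I. I \<subseteq> {..<n} \<and> card I = 0 \<and> 0 \<notin> I}"
    then have "I \<subseteq> {..<n}" "card I = 0" by auto
    then show "I \<in> {{}}" using finite_subset[of I "{..<n}"] by simp
  qed auto
  then show ?thesis by (simp add: Yc_def pdet_def)
qed

lemma Yc_top:
  assumes "n \<ge> 1"
  shows "Yc n A n = 0"
proof -
  have small: "card I < n" if I: "I \<subseteq> {..<n}" and I0: "0 \<notin> I" for I :: "nat set"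
  proof -
    have "I \<subseteq> {1..<n}"
    proof
      fix x assume x: "x \<in> I"
      have "x < n" using I x by blast
      moreover have "x \<noteq> 0" using I0 x by metis
      ultimately show "x \<in> {1..<n}" by simp
    qed
    then have "card I \<le> n - 1" using card_mono[of "{1..<n}" I] by simp
    then show ?thesis using assms by linarith
  qed
  then have none: "{I. I \<subseteq> {..<n} \<and> card I = n \<and> 0 \<notin> I} = {}"
    by (metis (mono_tags, lifting) empty_Collect_eq less_irrefl)
  show ?thesis unfolding Yc_def none by simp
qed

lemma Qn_subset_sum:
  assumes "n \<ge> 1"
  shows "(\<Sum>S | S \<subseteq> {..<n} \<and> 0 \<notin> S. (-1)^card S * z^card S * pdet A S) = poly (Qn n (Yc n A)) z"
proof -
  have "(\<Sum>S | S \<subseteq> {..<n} \<and> 0 \<notin> S. (-1)^card S * z^card S * pdet A S)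
      = (\<Sum>j\<le>n. (-1)^j * z^j * Yc n A j)"
    using sum_subsets_by_card[where N="{..<n}" and P="\<lambda>S. 0 \<notin> S" and f="\<lambda>j. (-1)^j * z^j" and g="pdet A"]
    by (simp add: Yc_def)
  also have "\<dots> = (\<Sum>j<n. (-1)^j * z^j * Yc n A j)"
  proof -
    have "{..n} = insert n {..<n}" by auto
    then show ?thesis by (simp add: Yc_top[OF assms])
  qed
  also have "\<dots> = 1 + (\<Sum>j\<in>{1..<n}. (-1)^j * z^j * Yc n A j)"
  proof -
    have "{..<n} = insert 0 {1..<n}" using assms by auto
    then show ?thesis by (simp add: Yc_0)
  qed
  finally show ?thesis by (simp add: poly_Qn mult_ac)
qed

text \<open>For \<open>j \<ge> 1\<close>, \<open>X_j(A)\<close> is the sum of the \<open>j \<times> j\<close> principal minors through index 0 (for \<open>j = 1\<close>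
  this is the entry \<open>a\<^sub>1\<^sub>1\<close>, which the definition lists separately).\<close>
lemma Xc_as_minor_sum:
  assumes "n \<ge> 1" "j \<ge> 1"
  shows "Xc n A j = (\<Sum>S | S \<subseteq> {..<n} \<and> card S = j \<and> 0 \<in> S. pdet A S)"
proof (cases "j = 1")
  case True
  have "{S. S \<subseteq> {..<n} \<and> card S = 1 \<and> 0 \<in> S} = {{0}}"
    using assms(1) by (auto simp: card_1_singleton_iff)
  then show ?thesis using True by (simp add: Xc_def pdet_def)
qed (simp add: Xc_def)

lemma Pn_subset_sum:
  assumes "n \<ge> 1"
  shows "(\<Sum>S | S \<subseteq> {..<n} \<and> 0 \<in> S. (-1)^(card S - 1) * z^(card S - 1) * pdet A S)
       = poly (Pn n (Xc n A)) z"
proof -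
  let ?X = "\<lambda>j. \<Sum>S | S \<subseteq> {..<n} \<and> card S = j \<and> 0 \<in> S. pdet A S"
  have no_empty: "{S. S \<subseteq> {..<n} \<and> card S = 0 \<and> 0 \<in> S} = {}"
  proof (intro equals0I)
    fix S assume S: "S \<in> {S. S \<subseteq> {..<n} \<and> card S = 0 \<and> 0 \<in> S}"
    then have "finite S" using finite_subset by blast
    with S show False by auto
  qed
  have X0: "?X 0 = 0" unfolding no_empty by simp
  obtain m where m: "n = Suc m" using assms by (cases n) auto
  have shift: "(\<Sum>j\<le>n. h j) = h 0 + (\<Sum>i<n. h (Suc i))" for h :: "nat \<Rightarrow> complex"
    unfolding m sum.atMost_Suc_shift lessThan_Suc_atMost ..
  have "(\<Sum>S | S \<subseteq> {..<n} \<and> 0 \<in> S. (-1)^(card S - 1) * z^(card S - 1) * pdet A S)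
      = (\<Sum>j\<le>n. (-1)^(j - 1) * z^(j - 1) * ?X j)"
    using sum_subsets_by_card[where N="{..<n}" and P="\<lambda>S. 0 \<in> S" and f="\<lambda>j. (-1)^(j - 1) * z^(j - 1)" and g="pdet A"]
    by simp
  also have "\<dots> = (\<Sum>i<n. (-1)^i * z^i * ?X (Suc i))"
    by (simp only: shift X0) simp
  also have "\<dots> = (\<Sum>i<n. (-1)^i * z^i * Xc n A (Suc i))"
    using Xc_as_minor_sum[OF assms] by simp
  finally show ?thesis by (simp add: poly_Pn mult_ac)
qed

definition e1n_diag :: "complex \<Rightarrow> complex \<Rightarrow> nat \<Rightarrow> complex" where
  "e1n_diag w z i = (if i = 0 then w else z)"

definition e1n_mat :: "complex \<Rightarrow> complex \<Rightarrow> cmat" where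
  "e1n_mat w z = (\<lambda>i j. if i = j then e1n_diag w z i else 0)"

lemma E1n_eq: "E1n = {e1n_mat w z | w z. True}"
  unfolding E1n_def e1n_mat_def e1n_diag_def by blast

lemma prod_e1n_diag:
  assumes "finite S"
  shows "(\<Prod>i\<in>S. e1n_diag w z i) = (if 0 \<in> S then w * z^(card S - 1) else z^card S)"
proof (cases "0 \<in> S")
  case True
  have "(\<Prod>i\<in>S. e1n_diag w z i) = e1n_diag w z 0 * (\<Prod>i\<in>S - {0}. e1n_diag w z i)"
    using assms True by (rule prod.remove)
  also have "(\<Prod>i\<in>S - {0}. e1n_diag w z i) = (\<Prod>i\<in>S - {0}. z)"
    by (rule prod.cong) (auto simp: e1n_diag_def)
  finally show ?thesis using True assms by (simp add: e1n_diag_def)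
next
  case False
  have "(\<Prod>i\<in>S. e1n_diag w z i) = (\<Prod>i\<in>S. z)"
    by (rule prod.cong) (use False in \<open>auto simp: e1n_diag_def\<close>)
  then show ?thesis using False by simp
qed

lemma signed_prod_e1n_diag:
  assumes "finite S"
  shows "(-1)^card S * (\<Prod>i\<in>S. e1n_diag w z i)
       = (if 0 \<in> S then - w * ((-1)^(card S - 1) * z^(card S - 1)) else (-1)^card S * z^card S)"
proof (cases "0 \<in> S")
  case True
  then have "card S \<noteq> 0" using assms by auto
  then have "(-1::complex)^card S = - ((-1)^(card S - 1))" by (cases "card S") simp_all
  then show ?thesis using assms True by (simp add: prod_e1n_diag)
qed (simp add: prod_e1n_diag assms)

lemma minor_sum_e1n:
  assumes fin: "finite N"
  shows "(\<Sum>S\<in>Pow N. (-1)^card S * (\<Prod>i\<in>S. e1n_diag w z i) * pdet A S)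
       = (\<Sum>S | S \<subseteq> N \<and> 0 \<notin> S. (-1)^card S * z^card S * pdet A S)
         - w * (\<Sum>S | S \<subseteq> N \<and> 0 \<in> S. (-1)^(card S - 1) * z^(card S - 1) * pdet A S)"
proof -
  have fS: "finite S" if "S \<subseteq> N" for S using finite_subset[OF that fin] .
  have "Pow N = {S. S \<subseteq> N \<and> 0 \<notin> S} \<union> {S. S \<subseteq> N \<and> 0 \<in> S}" by auto
  then have "(\<Sum>S\<in>Pow N. (-1)^card S * (\<Prod>i\<in>S. e1n_diag w z i) * pdet A S)
      = (\<Sum>S | S \<subseteq> N \<and> 0 \<notin> S. (-1)^card S * (\<Prod>i\<in>S. e1n_diag w z i) * pdet A S)
      + (\<Sum>S | S \<subseteq> N \<and> 0 \<in> S. (-1)^card S * (\<Prod>i\<in>S. e1n_diag w z i) * pdet A S)"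
    using fin by (simp add: sum.union_disjoint disjoint_iff)
  also have "\<dots> = (\<Sum>S | S \<subseteq> N \<and> 0 \<notin> S. (-1)^card S * z^card S * pdet A S)
      + (\<Sum>S | S \<subseteq> N \<and> 0 \<in> S. - w * ((-1)^(card S - 1) * z^(card S - 1) * pdet A S))"
    by (intro arg_cong2[where f = "(+)"] sum.cong refl) (auto simp: signed_prod_e1n_diag fS)
  finally show ?thesis by (simp add: sum_distrib_left sum_negf)
qed

lemma mmul_e1n_mat:
  assumes "j < n"
  shows "mmul n A (e1n_mat w z) i j = A i j * e1n_diag w z j"
proof -
  have "(\<Sum>k<n. A i k * e1n_mat w z k j) = (\<Sum>k<n. if k = j then A i j * e1n_diag w z j else 0)"
    by (rule sum.cong) (auto simp: e1n_mat_def)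
  then show ?thesis using assms by (simp add: mmul_def)
qed

lemma cdet_e1n:
  assumes "n \<ge> 1"
  shows "cdet n (\<lambda>i j. idm i j - mmul n A (e1n_mat w z) i j)
       = poly (Qn n (Yc n A)) z - w * poly (Pn n (Xc n A)) z"
proof -
  have "cdet n (\<lambda>i j. idm i j - mmul n A (e1n_mat w z) i j)
      = pdet (\<lambda>i j. idm i j - A i j * e1n_diag w z j) {..<n}"
    unfolding cdet_def by (rule pdet_cong) (simp add: mmul_e1n_mat)
  also have "\<dots> = (\<Sum>S\<in>Pow {..<n}. (-1)^card S * (\<Prod>i\<in>S. e1n_diag w z i) * pdet A S)"
    by (rule pdet_identity_minus) simp
  also have "\<dots> = poly (Qn n (Yc n A)) z - w * poly (Pn n (Xc n A)) z"
    unfolding minor_sum_e1n[OF finite_lessThan] Qn_subset_sum[OF assms] Pn_subset_sum[OF assms] ..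
  finally show ?thesis .
qed

lemma singular_e1n_iff:
  assumes "n \<ge> 1"
  shows "singular n (\<lambda>i j. idm i j - mmul n A (e1n_mat w z) i j)
     \<longleftrightarrow> poly (Qn n (Yc n A)) z - w * poly (Pn n (Xc n A)) z = 0"
  unfolding singular_def cdet_e1n[OF assms] ..

lemma vnorm_e1n_mat_le:
  "vnorm n (mvec n (e1n_mat w z) v) \<le> max (cmod w) (cmod z) * vnorm n v"
proof -
  define m where "m = max (cmod w) (cmod z)"
  have m0: "m \<ge> 0" by (simp add: m_def le_max_iff_disj)
  have "(\<Sum>i<n. (cmod (mvec n (e1n_mat w z) v i))\<^sup>2) \<le> (\<Sum>i<n. m\<^sup>2 * (cmod (v i))\<^sup>2)"
  proof (rule sum_mono)
    fix i assume "i \<in> {..<n}"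
    have "mvec n (e1n_mat w z) v i = (\<Sum>k<n. if k = i then e1n_diag w z i * v i else 0)"
      unfolding mvec_def by (rule sum.cong) (auto simp: e1n_mat_def)
    then have "mvec n (e1n_mat w z) v i = e1n_diag w z i * v i" using \<open>i \<in> {..<n}\<close> by simp
    moreover have "(cmod (e1n_diag w z i))\<^sup>2 \<le> m\<^sup>2"
      by (rule power_mono) (auto simp: e1n_diag_def m_def)
    ultimately show "(cmod (mvec n (e1n_mat w z) v i))\<^sup>2 \<le> m\<^sup>2 * (cmod (v i))\<^sup>2"
      by (simp add: norm_mult power_mult_distrib mult_right_mono)
  qed
  then have "vnorm n (mvec n (e1n_mat w z) v) \<le> sqrt (m\<^sup>2 * (\<Sum>i<n. (cmod (v i))\<^sup>2))"
    unfolding vnorm_def by (simp add: sum_distrib_left)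
  also have "\<dots> = m * vnorm n v" using m0 by (simp add: real_sqrt_mult vnorm_def)
  finally show ?thesis by (simp add: m_def)
qed

lemma vnorm_unit:
  assumes "k < n"
  shows "vnorm n (\<lambda>i. if i = k then c else 0) = cmod c"
proof -
  have "(\<Sum>i<n. (cmod (if i = k then c else 0))\<^sup>2) = (\<Sum>i<n. if i = k then (cmod c)\<^sup>2 else 0)"
    by (rule sum.cong) auto
  then show ?thesis using assms by (simp add: vnorm_def)
qed

text \<open>The operator norm of \<open>[w] \<oplus> z I\<close> is \<open>max |w| |z|\<close>; the lower bound needs \<open>n \<ge> 2\<close>, so that
  both diagonal entries occur.\<close>
lemma opnorm_e1n_mat:
  assumes n: "n \<ge> 2"
  shows "opnorm n (e1n_mat w z) = max (cmod w) (cmod z)"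
proof -
  define T where "T = {vnorm n (mvec n (e1n_mat w z) v) | v. vnorm n v \<le> 1}"
  have ub: "t \<le> max (cmod w) (cmod z)" if "t \<in> T" for t
  proof -
    obtain v where v: "t = vnorm n (mvec n (e1n_mat w z) v)" "vnorm n v \<le> 1"
      using \<open>t \<in> T\<close> T_def by blast
    have "t \<le> max (cmod w) (cmod z) * vnorm n v" using v(1) vnorm_e1n_mat_le by simp
    also have "\<dots> \<le> max (cmod w) (cmod z)" using v(2) by (intro mult_left_le) (auto simp: le_max_iff_disj)
    finally show ?thesis .
  qed
  (* the first two unit vectors realise the moduli of the two diagonal entries *)
  have unit: "cmod (e1n_diag w z k) \<in> T" if "k < n" for k
  proof -
    have "mvec n (e1n_mat w z) (\<lambda>j. if j = k then 1 else 0) i = e1n_mat w z i k" for i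
    proof -
      have "mvec n (e1n_mat w z) (\<lambda>j. if j = k then 1 else 0) i = (\<Sum>j<n. if j = k then e1n_mat w z i k else 0)"
        unfolding mvec_def by (rule sum.cong) auto
      then show ?thesis using that by simp
    qed
    then have "mvec n (e1n_mat w z) (\<lambda>i. if i = k then 1 else 0) = (\<lambda>i. if i = k then e1n_diag w z k else 0)"
      by (auto simp: e1n_mat_def)
    then show ?thesis unfolding T_def using that vnorm_unit[OF that]
      by (auto intro!: exI[of _ "\<lambda>i. if i = k then 1 else 0"])
  qed
  have wT: "cmod w \<in> T" and zT: "cmod z \<in> T"
    using unit[of 0] unit[of 1] n by (simp_all add: e1n_diag_def)
  have bdd: "bdd_above T" using ub by (intro bdd_aboveI) auto
  have "opnorm n (e1n_mat w z) \<le> max (cmod w) (cmod z)"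
    unfolding opnorm_def T_def[symmetric] using wT ub by (intro cSup_least) auto
  moreover have "max (cmod w) (cmod z) \<le> opnorm n (e1n_mat w z)"
    unfolding opnorm_def T_def[symmetric] using cSup_upper[OF wT bdd] cSup_upper[OF zT bdd] by simp
  ultimately show ?thesis by simp
qed

text \<open>If \<open>\<mu>_E(A) < 1\<close> and the perturbations making \<open>I - AX\<close> singular are bounded away from 0,
  then every such perturbation has norm larger than 1.  (The lower bound is needed because
  \<open>inverse 0 = 0\<close>.)\<close>
lemma mu_less_one_imp_large:
  assumes mu: "mu n E A < 1" and d: "d > 0"
    and lower: "\<And>X. X \<in> E \<Longrightarrow> singular n (\<lambda>i j. idm i j - mmul n A X i j) \<Longrightarrow> d \<le> opnorm n X"
    and X: "X \<in> E" "singular n (\<lambda>i j. idm i j - mmul n A X i j)"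
  shows "1 < opnorm n X"
proof -
  define S where "S = {opnorm n X | X. X \<in> E \<and> singular n (\<lambda>i j. idm i j - mmul n A X i j)}"
  have XS: "opnorm n X \<in> S" using X by (auto simp: S_def)
  have lb: "d \<le> s" if "s \<in> S" for s using that lower by (auto simp: S_def)
  have "d \<le> Inf S" using XS lb by (intro cInf_greatest) auto
  moreover have "inverse (Inf S) < 1"
  proof -
    have "S \<noteq> {}" using XS by auto
    then have "mu n E A = inverse (Inf S)" unfolding mu_def Let_def S_def[symmetric] by simp
    then show ?thesis using mu by simp
  qed
  ultimately have "1 < Inf S" using d by (simp add: inverse_less_1_iff)
  also have "Inf S \<le> opnorm n X" by (rule cInf_lower[OF XS bdd_belowI[OF lb]])
  finally show ?thesis .
qed

lemma poly_Qn_0: "poly (Qn n y) 0 = 1"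
proof -
  have "(\<Sum>j\<in>{1..<n}. (-1)^j * y j * (0::complex)^j) = 0" by (rule sum.neutral) auto
  then show ?thesis by (simp add: poly_Qn)
qed

text \<open>Singular perturbations in \<open>E^{1,n}\<close> stay away from 0: near \<open>(w, z) = (0, 0)\<close> the
  determinant \<open>Q(z) - w P(z)\<close> is close to \<open>Q(0) = 1\<close>.\<close>
lemma e1n_singular_bounded_below:
  "\<exists>d>0. \<forall>w z. poly (Qn n (Yc n A)) z - w * poly (Pn n (Xc n A)) z = 0 \<longrightarrow> d \<le> max (cmod w) (cmod z)"
proof -
  define \<phi> where "\<phi> x = poly (Qn n (Yc n A)) (snd x) - fst x * poly (Pn n (Xc n A)) (snd x)"
    for x :: "complex \<times> complex"
  have "continuous (at (0, 0)) \<phi>" unfolding \<phi>_def by (intro continuous_intros)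
  moreover have "\<phi> (0, 0) \<noteq> 0" by (simp add: \<phi>_def poly_Qn_0)
  ultimately obtain e where e: "e > 0" "\<And>y. dist (0, 0) y < e \<Longrightarrow> \<phi> y \<noteq> 0"
    using continuous_at_avoid by blast
  show ?thesis
  proof (intro exI[of _ "e / 2"] conjI allI impI)
    show "e / 2 > 0" using e(1) by simp
    fix w z assume "poly (Qn n (Yc n A)) z - w * poly (Pn n (Xc n A)) z = 0"
    then have "\<phi> (w, z) = 0" by (simp add: \<phi>_def)
    then have "\<not> dist (0, 0) (w, z) < e" using e(2) by blast
    moreover have "dist (0, 0) (w, z) \<le> cmod w + cmod z"
      using norm_Pair_le[of "-w" "-z"] by (simp add: dist_norm)
    ultimately show "e / 2 \<le> max (cmod w) (cmod z)" by linarith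
  qed
qed

lemma omega_nonsingular:
  assumes n: "n \<ge> 2" and A: "A \<in> Omega1n n" and w: "cmod w \<le> 1" and z: "cmod z \<le> 1"
  shows "poly (Qn n (Yc n A)) z - w * poly (Pn n (Xc n A)) z \<noteq> 0"
proof
  assume sing: "poly (Qn n (Yc n A)) z - w * poly (Pn n (Xc n A)) z = 0"
  have n1: "n \<ge> 1" using n by simp
  obtain d where d: "d > 0"
    and lower: "\<forall>w z. poly (Qn n (Yc n A)) z - w * poly (Pn n (Xc n A)) z = 0 \<longrightarrow> d \<le> max (cmod w) (cmod z)"
    using e1n_singular_bounded_below by blast
  have "1 < opnorm n (e1n_mat w z)"
  proof (rule mu_less_one_imp_large[where E = E1n and d = d])
    show "mu n E1n A < 1" using A by (simp add: Omega1n_def)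
    show "d \<le> opnorm n X" if "X \<in> E1n" "singular n (\<lambda>i j. idm i j - mmul n A X i j)" for X
      using that lower by (auto simp: E1n_eq opnorm_e1n_mat[OF n] singular_e1n_iff[OF n1])
    show "e1n_mat w z \<in> E1n" by (auto simp: E1n_eq)
    show "singular n (\<lambda>i j. idm i j - mmul n A (e1n_mat w z) i j)"
      using sing by (simp add: singular_e1n_iff[OF n1])
  qed (use d in simp)
  moreover have "opnorm n (e1n_mat w z) \<le> 1" using w z by (simp add: opnorm_e1n_mat[OF n])
  ultimately show False by simp
qed

lemma omega_Q_nonzero:
  assumes "n \<ge> 2" "A \<in> Omega1n n" "cmod z \<le> 1"
  shows "poly (Qn n (Yc n A)) z \<noteq> 0"
  using omega_nonsingular[OF assms(1,2) _ assms(3), of 0] by simp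

lemma omega_P_less_Q:
  assumes "n \<ge> 2" "A \<in> Omega1n n" "cmod z \<le> 1"
  shows "cmod (poly (Pn n (Xc n A)) z) < cmod (poly (Qn n (Yc n A)) z)"
proof (rule ccontr)
  assume "\<not> ?thesis"
  then have le: "cmod (poly (Qn n (Yc n A)) z) \<le> cmod (poly (Pn n (Xc n A)) z)" by simp
  then have P: "poly (Pn n (Xc n A)) z \<noteq> 0" using omega_Q_nonzero[OF assms] by auto
  define w where "w = poly (Qn n (Yc n A)) z / poly (Pn n (Xc n A)) z"
  have "cmod w \<le> 1" using le P by (simp add: w_def norm_divide divide_le_eq_1)
  moreover have "poly (Qn n (Yc n A)) z - w * poly (Pn n (Xc n A)) z = 0" using P by (simp add: w_def)
  ultimately show False using omega_nonsingular[OF assms(1,2) _ assms(3)] by blast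
qed

lemma Xc_cong:
  assumes "n \<ge> 1" "\<And>a b. a < n \<Longrightarrow> b < n \<Longrightarrow> A a b = B a b"
  shows "Xc n A = Xc n B"
proof
  fix j
  have "pdet A I = pdet B I" if "I \<subseteq> {..<n}" for I
    using that assms(2) by (intro pdet_cong) auto
  then show "Xc n A j = Xc n B j" unfolding Xc_def using assms by (auto intro!: sum.cong)
qed

lemma Yc_cong:
  assumes "\<And>a b. a < n \<Longrightarrow> b < n \<Longrightarrow> A a b = B a b"
  shows "Yc n A = Yc n B"
proof
  fix j
  have "pdet A I = pdet B I" if "I \<subseteq> {..<n}" for I
    using that assms by (intro pdet_cong) auto
  then show "Yc n A j = Yc n B j" unfolding Yc_def by (auto intro!: sum.cong)
qed

lemma pdet_holomorphic:
  assumes "\<forall>a<n. \<forall>b<n. (\<lambda>\<xi>. F \<xi> a b) holomorphic_on U" "I \<subseteq> {..<n}"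
  shows "(\<lambda>\<xi>. pdet (F \<xi>) I) holomorphic_on U"
  unfolding pdet_def
proof (intro holomorphic_intros)
  fix p i assume "p \<in> {p. p permutes I}" "i \<in> I"
  then have "p i \<in> I" using permutes_in_image by fastforce
  then show "(\<lambda>\<xi>. F \<xi> i (p i)) holomorphic_on U" using assms \<open>i \<in> I\<close> by blast
qed

lemma Xc_holomorphic:
  assumes "n \<ge> 1" "\<forall>a<n. \<forall>b<n. (\<lambda>\<xi>. F \<xi> a b) holomorphic_on U"
  shows "(\<lambda>\<xi>. Xc n (F \<xi>) j) holomorphic_on U"
proof (cases "j = 1")
  case True
  then show ?thesis using assms by (simp add: Xc_def)
next
  case False
  then show ?thesis unfolding Xc_def using pdet_holomorphic[OF assms(2)]
    by (simp, intro holomorphic_intros) auto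
qed

lemma Yc_holomorphic:
  assumes "\<forall>a<n. \<forall>b<n. (\<lambda>\<xi>. F \<xi> a b) holomorphic_on U"
  shows "(\<lambda>\<xi>. Yc n (F \<xi>) j) holomorphic_on U"
  unfolding Yc_def using pdet_holomorphic[OF assms] by (intro holomorphic_intros) auto

lemma Psi_reduced:
  assumes "poly (Qn n y) z \<noteq> 0"
  shows "poly (Psi_den n x y) z \<noteq> 0" and "Psi n z x y = poly (Pn n x) z / poly (Qn n y) z"
proof -
  define g where "g = gcd (Pn n x) (Qn n y)"
  have P: "Pn n x = Psi_num n x y * g" and Q: "Qn n y = Psi_den n x y * g"
    unfolding Psi_num_def Psi_den_def g_def by simp_all
  have "poly (Psi_den n x y) z * poly g z \<noteq> 0" using assms Q by (metis poly_mult)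
  then have den: "poly (Psi_den n x y) z \<noteq> 0" and g: "poly g z \<noteq> 0" by auto
  show "poly (Psi_den n x y) z \<noteq> 0" by (rule den)
  show "Psi n z x y = poly (Pn n x) z / poly (Qn n y) z"
    unfolding Psi_def using den g by (subst P, subst Q) simp
qed

lemma omega_ratio_self_map:
  assumes n: "n \<ge> 2" and z: "cmod z \<le> 1"
    and holF: "\<forall>a<n. \<forall>b<n. (\<lambda>\<xi>. F \<xi> a b) holomorphic_on ball 0 1"
    and FO: "\<forall>\<xi>\<in>ball 0 1. F \<xi> \<in> Omega1n n"
  defines "f \<equiv> \<lambda>\<xi>. poly (Pn n (Xc n (F \<xi>))) z / poly (Qn n (Yc n (F \<xi>))) z"
  shows "f holomorphic_on ball 0 1" and "\<forall>\<xi>\<in>ball 0 1. f \<xi> \<in> ball 0 1"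
proof -
  have n1: "n \<ge> 1" using n by simp
  have Q: "poly (Qn n (Yc n (F \<xi>))) z \<noteq> 0" if "\<xi> \<in> ball 0 1" for \<xi>
    using omega_Q_nonzero[OF n _ z] FO that by blast
  show "f holomorphic_on ball 0 1"
    unfolding f_def poly_Pn poly_Qn
    by (intro holomorphic_intros Xc_holomorphic[OF n1] Yc_holomorphic)
      (use holF Q in \<open>simp_all add: poly_Pn poly_Qn\<close>)
  show "\<forall>\<xi>\<in>ball 0 1. f \<xi> \<in> ball 0 1"
    using omega_P_less_Q[OF n _ z] FO Q by (simp add: f_def norm_divide divide_less_eq_1)
qed

text \<open>For each \<open>z\<close> with \<open>|z| \<le> 1\<close> the denominators of \<open>\<Psi>_n(\<cdot>; \<pi>_n(W\<^sub>j))\<close> do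
  not vanish at \<open>z\<close>, and the Pick matrix of \<open>\<xi> \<mapsto> \<Psi>_n(z; \<pi>_n(F \<xi>))\<close> at the nodes \<open>\<zeta>\<^sub>j\<close> is the
  matrix of the statement.\<close>
theorem theorem2:
  fixes n M :: nat and \<zeta> :: "nat \<Rightarrow> complex" and W :: "nat \<Rightarrow> cmat"
  assumes "n \<ge> 2"
    and "inj_on \<zeta> {..<M}"
    and "\<forall>j<M. \<zeta> j \<in> ball 0 1"
    and "\<forall>j<M. W j \<in> Omega1n n"
    and "\<exists>F :: complex \<Rightarrow> cmat.
           (\<forall>a<n. \<forall>b<n. (\<lambda>z. F z a b) holomorphic_on ball 0 1)
         \<and> (\<forall>z\<in>ball 0 1. F z \<in> Omega1n n)
         \<and> (\<forall>j<M. \<forall>a<n. \<forall>b<n. F (\<zeta> j) a b = W j a b)"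
  shows "\<forall>z. cmod z \<le> 1 \<longrightarrow>
           (\<forall>j<M. poly (Psi_den n (Xc n (W j)) (Yc n (W j))) z \<noteq> 0)
         \<and> psd M (\<lambda>j k. (1 - cnj (Psi n z (Xc n (W j)) (Yc n (W j)))
                             * Psi n z (Xc n (W k)) (Yc n (W k)))
                          / (1 - cnj (\<zeta> j) * \<zeta> k))"
proof (rule allI, rule impI, rule conjI)
  fix z :: complex assume z: "cmod z \<le> 1"
  have n1: "n \<ge> 1" using assms(1) by simp
  obtain F :: "complex \<Rightarrow> cmat" where
    holF: "\<forall>a<n. \<forall>b<n. (\<lambda>z. F z a b) holomorphic_on ball 0 1" and
    FO: "\<forall>z\<in>ball 0 1. F z \<in> Omega1n n" and
    FW: "\<forall>j<M. \<forall>a<n. \<forall>b<n. F (\<zeta> j) a b = W j a b"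
    using assms(5) by blast
  have Q: "poly (Qn n (Yc n (W j))) z \<noteq> 0" if "j < M" for j
    using omega_Q_nonzero[OF assms(1) _ z] assms(4) that by blast
  show "\<forall>j<M. poly (Psi_den n (Xc n (W j)) (Yc n (W j))) z \<noteq> 0"
    using Psi_reduced(1)[OF Q] by blast
  define f where "f = (\<lambda>\<xi>. poly (Pn n (Xc n (F \<xi>))) z / poly (Qn n (Yc n (F \<xi>))) z)"
  have f_nodes: "f (\<zeta> j) = Psi n z (Xc n (W j)) (Yc n (W j))" if "j < M" for j
  proof -
    have "Xc n (F (\<zeta> j)) = Xc n (W j)" "Yc n (F (\<zeta> j)) = Yc n (W j)"
      using FW that by (auto intro!: Xc_cong[OF n1] Yc_cong)
    then show ?thesis using Psi_reduced(2)[OF Q[OF that]] by (simp add: f_def)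
  qed
  have "psd M (pick_matrix f \<zeta>)"
    using omega_ratio_self_map[OF assms(1) z holF FO] assms(3)
    unfolding f_def by (intro pick_matrix_psd) auto
  moreover have "psd M (pick_matrix f \<zeta>) \<longleftrightarrow> psd M (\<lambda>j k. (1 - cnj (Psi n z (Xc n (W j)) (Yc n (W j)))
                             * Psi n z (Xc n (W k)) (Yc n (W k))) / (1 - cnj (\<zeta> j) * \<zeta> k))"
    by (rule psd_cong) (simp add: pick_matrix_def f_nodes)
  ultimately show "psd M (\<lambda>j k. (1 - cnj (Psi n z (Xc n (W j)) (Yc n (W j)))
                             * Psi n z (Xc n (W k)) (Yc n (W k)))
                          / (1 - cnj (\<zeta> j) * \<zeta> k))" by simp
qed

end
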